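(* Let $K$ be a ramified quadratic extension of $\mathbb{Q}_2$, $d=2m$ with $m$ odd, $m\ge3$, and $f=a_1x_1^d+\dots+a_sx_s^d$ with all $a_i\in\mathcal{O}\setminus\{0\}$. Suppose that for some level $k$, $f$ has two variables at level $k$ with differing $\pi$-coefficients, a variable at level $k+1$, and a variable in at least one of the levels $k+2$ or $k+4$. Then $f$ has a nontrivial zero in $K$.
   Context: $\mathcal{O}$ is the ring of integers of $K$ and $\pi$ the uniformizer: $\pi=\sqrt{2},\sqrt{-2},\sqrt{10},\sqrt{-10},1+\sqrt{-1},1+\sqrt{-5}$ for $K=\mathbb{Q}_2(\sqrt2),\mathbb{Q}_2(\sqrt{-2}),\mathbb{Q}_2(\sqrt{10}),\mathbb{Q}_2(\sqrt{-10}),\mathbb{Q}_2(\sqrt{-1}),\mathbb{Q}_2(\sqrt{-5})$ respectively. Each unit $u$ has a unique expansion $u=c_0+c_1\pi+c_2\pi^2+\cdots$ with $c_j\in\{0,1\}$, $c_0=1$. Writing $a_i=\pi^r u$ with $u$ a unit, the variable $x_i$ is at level $r\bmod d$ (levels are residues modulo $d$), and its $\pi$-coefficient is $c_1$ of $u$. A nontrivial zero is a point of $K^s$, not all coordinates zero, where $f$ vanishes. *)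

theory Defs
  imports "HOL-Computational_Algebra.Polynomial"
begin

text \<open>The six ramified quadratic extensions K of Q_2 with their chosen uniformizers pi.\<close>
datatype ramified_case = Q2_sqrt2 | Q2_sqrt_m2 | Q2_sqrt10 | Q2_sqrt_m10 | Q2_sqrt_m1 | Q2_sqrt_m5

text \<open>Minimal polynomial over Z of the uniformizer pi:
  sqrt 2, sqrt(-2), sqrt 10, sqrt(-10), 1 + sqrt(-1), 1 + sqrt(-5).
  The ring of integers O of K is Z_2[pi] = lim Z[X]/(2^n, g).\<close>
fun minpoly :: "ramified_case \<Rightarrow> int poly" where
  "minpoly Q2_sqrt2 = [:-2, 0, 1:]"
| "minpoly Q2_sqrt_m2 = [:2, 0, 1:]"
| "minpoly Q2_sqrt10 = [:-10, 0, 1:]"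
| "minpoly Q2_sqrt_m10 = [:10, 0, 1:]"
| "minpoly Q2_sqrt_m1 = [:2, -2, 1:]"
| "minpoly Q2_sqrt_m5 = [:6, -2, 1:]"

definition upi :: "int poly" where "upi = [:0, 1:]"

text \<open>Congruence in O / 2^n O = Z[X]/(2^n, g).\<close>
definition congO :: "ramified_case \<Rightarrow> nat \<Rightarrow> int poly \<Rightarrow> int poly \<Rightarrow> bool" where
  "congO K n p q \<longleftrightarrow> (\<exists>h k. p - q = smult (2 ^ n) h + minpoly K * k)"

text \<open>An element of O is a coherent sequence of representatives x n of its images in O / 2^n O.\<close>
definition is_O :: "ramified_case \<Rightarrow> (nat \<Rightarrow> int poly) \<Rightarrow> bool" where
  "is_O K x \<longleftrightarrow> (\<forall>n. congO K n (x (Suc n)) (x n))"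

definition O_nonzero :: "ramified_case \<Rightarrow> (nat \<Rightarrow> int poly) \<Rightarrow> bool" where
  "O_nonzero K x \<longleftrightarrow> (\<exists>n. \<not> congO K n (x n) 0)"

definition dvdO :: "ramified_case \<Rightarrow> int poly \<Rightarrow> (nat \<Rightarrow> int poly) \<Rightarrow> bool" where
  "dvdO K y x \<longleftrightarrow> (\<forall>n. \<exists>z. congO K n (x n) (y * z))"

definition valO :: "ramified_case \<Rightarrow> (nat \<Rightarrow> int poly) \<Rightarrow> nat" where
  "valO K x = (LEAST r. \<not> dvdO K (upi ^ Suc r) x)"

definition level :: "ramified_case \<Rightarrow> nat \<Rightarrow> (nat \<Rightarrow> int poly) \<Rightarrow> nat" where
  "level K d x = valO K x mod d"

text \<open>pi-coefficient c_1 of the unit u = x / pi^r in its expansion u = 1 + c_1 pi + c_2 pi^2 + ...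
  (c_j in {0,1}); i.e. u = 1 + c_1 pi mod pi^2, equivalently x = pi^r (1 + c_1 pi) mod pi^(r+2).\<close>
definition pi_coeff :: "ramified_case \<Rightarrow> (nat \<Rightarrow> int poly) \<Rightarrow> int" where
  "pi_coeff K x = (THE c. c \<in> {0, 1} \<and>
      dvdO K (upi ^ (valO K x + 2)) (\<lambda>n. x n - upi ^ valO K x * [:1, c:]))"

text \<open>f = sum a_i x_i^d has a nontrivial zero (with coordinates in O; equivalent to K by homogeneity).\<close>
definition has_nontrivial_zero ::
  "ramified_case \<Rightarrow> nat \<Rightarrow> nat \<Rightarrow> (nat \<Rightarrow> nat \<Rightarrow> int poly) \<Rightarrow> bool" where
  "has_nontrivial_zero K d s a \<longleftrightarrow>
     (\<exists>x :: nat \<Rightarrow> nat \<Rightarrow> int poly. (\<forall>i<s. is_O K (x i)) \<and> (\<exists>i<s. O_nonzero K (x i)) \<and>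
        (\<forall>n. congO K n (\<Sum>i<s. a i n * x i n ^ d) 0))"

end

theory Submission
  imports Defs
begin

(* Scaling x_q by a power of pi multiplies a_q by a d-th power of pi and keeps its level, so
   we may assume v(a_i) = v(a_j) = N, v(a_l) = N + 1 and v(a_t) = N + 2 or N + 4.  The residue
   field is F_2, so the differing pi-coefficients make a_i + a_j of valuation exactly N + 1, and
   a_i + a_j + a_l vanishes modulo pi^(N+2).  As (1 + pi)^d - 1 has valuation exactly 2, choosing
   x_i and x_l in {1, 1 + pi}, and then x_t, clears the digits at pi^(N+2), pi^(N+3), pi^(N+4).
   Since v(d) = v(2) = 2, a unit root of a_i y^d + c modulo pi^(v(a_i)+5) lifts to an exact root
   (Hensel), which gives the zero with x_j = 1.

   The valuation bookkeeping rests on two facts: 2 is pi^2 times a unit, and pi^N is not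
   divisible by pi^(N+1), which is proved by taking norms. *)

section \<open>Congruences in O modulo powers of 2\<close>

lemma minpoly_Eisenstein: "\<exists>p q. minpoly K = [:2 * p, 2 * q, 1:] \<and> odd p"
proof -
  have "\<exists>p q. minpoly K = [:2 * p, 2 * q, 1:] \<and> odd p \<and> p \<in> {-5, -1, 1, 3, 5} \<and> q \<in> {-1, 0}"
    by (cases K) auto
  then show ?thesis by blast
qed

lemma congO_refl [simp]: "congO K n p p"
  unfolding congO_def by (intro exI[of _ 0]) simp

lemma congO_0_iff: "congO K n p q \<longleftrightarrow> congO K n (p - q) 0"
  unfolding congO_def by simp

lemma congO_by_diff: "congO K n (p - q) 0 \<Longrightarrow> congO K n p q"
  using congO_0_iff by blast

lemma congO_add: "congO K n p q \<Longrightarrow> congO K n p' q' \<Longrightarrow> congO K n (p + p') (q + q')"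
  unfolding congO_def
proof (elim exE)
  fix h k h' k'
  assume "p - q = smult (2 ^ n) h + minpoly K * k" "p' - q' = smult (2 ^ n) h' + minpoly K * k'"
  then have "p + p' - (q + q') = smult (2 ^ n) (h + h') + minpoly K * (k + k')"
    by (simp add: algebra_simps smult_add_right)
  then show "\<exists>h k. p + p' - (q + q') = smult (2 ^ n) h + minpoly K * k" by blast
qed

lemma congO_uminus: "congO K n p q \<Longrightarrow> congO K n (- p) (- q)"
  unfolding congO_def
proof (elim exE)
  fix h k
  assume "p - q = smult (2 ^ n) h + minpoly K * k"
  then have "- p - - q = smult (2 ^ n) (- h) + minpoly K * (- k)" by (simp add: algebra_simps)
  then show "\<exists>h k. - p - - q = smult (2 ^ n) h + minpoly K * k" by blast
qed

lemma congO_diff: "congO K n p q \<Longrightarrow> congO K n p' q' \<Longrightarrow> congO K n (p - p') (q - q')"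
  using congO_add[of K n p q "- p'" "- q'"] congO_uminus by fastforce

lemma congO_sym: "congO K n p q \<Longrightarrow> congO K n q p"
  using congO_uminus[of K n "p - q" 0] congO_0_iff by fastforce

lemma congO_trans [trans]: "congO K n p q \<Longrightarrow> congO K n q r \<Longrightarrow> congO K n p r"
  using congO_add[of K n "p - q" 0 "q - r" 0] congO_0_iff by fastforce

lemma congO_mult: "congO K n p q \<Longrightarrow> congO K n p' q' \<Longrightarrow> congO K n (p * p') (q * q')"
  unfolding congO_def
proof (elim exE)
  fix h k h' k'
  assume "p - q = smult (2 ^ n) h + minpoly K * k" and "p' - q' = smult (2 ^ n) h' + minpoly K * k'"
  then have "p * p' - q * q' = (p - q) * p' + q * (p' - q')" by (simp add: algebra_simps)
  also have "\<dots> = smult (2 ^ n) (h * p' + q * h') + minpoly K * (k * p' + q * k')"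
    unfolding \<open>p - q = _\<close> \<open>p' - q' = _\<close> by (simp add: algebra_simps smult_add_right)
  finally show "\<exists>h k. p * p' - q * q' = smult (2 ^ n) h + minpoly K * k" by blast
qed

lemma congO_power: "congO K n p q \<Longrightarrow> congO K n (p ^ k) (q ^ k)"
  by (induction k) (simp_all add: congO_mult)

lemma congO_mono: "congO K n p q \<Longrightarrow> n' \<le> n \<Longrightarrow> congO K n' p q"
  unfolding congO_def
proof (elim exE)
  fix h k
  assume "p - q = smult (2 ^ n) h + minpoly K * k" "n' \<le> n"
  moreover have "smult (2 ^ n) h = smult (2 ^ n') (smult (2 ^ (n - n')) h)"
    using \<open>n' \<le> n\<close> by (simp flip: power_add)
  ultimately show "\<exists>h k. p - q = smult (2 ^ n') h + minpoly K * k" by metis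
qed

lemma congO_smult_2_pow: "congO K n (smult (2 ^ n) h) 0"
  unfolding congO_def by (intro exI[of _ h] exI[of _ 0]) simp

lemma congO_minpoly: "congO K n (minpoly K * k) 0"
  unfolding congO_def by (intro exI[of _ 0] exI[of _ k]) simp

definition dvd_mod :: "ramified_case \<Rightarrow> nat \<Rightarrow> int poly \<Rightarrow> int poly \<Rightarrow> bool" where
  "dvd_mod K n y p \<longleftrightarrow> (\<exists>z. congO K n p (y * z))"

lemma dvdO_iff_dvd_mod: "dvdO K y x \<longleftrightarrow> (\<forall>n. dvd_mod K n y (x n))"
  unfolding dvdO_def dvd_mod_def ..

lemma dvd_modI: "congO K n p (y * z) \<Longrightarrow> dvd_mod K n y p"
  unfolding dvd_mod_def by blast

lemma dvd_mod_triv [simp]: "dvd_mod K n y (y * z)"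
  by (rule dvd_modI[OF congO_refl])

lemma dvd_mod_one [simp]: "dvd_mod K n 1 p"
  using dvd_mod_triv[of K n 1 p] by simp

lemma dvd_mod_0 [simp]: "dvd_mod K n y 0"
  using dvd_mod_triv[of K n y 0] by simp

lemma dvd_mod_cong: "congO K n p q \<Longrightarrow> dvd_mod K n y q \<Longrightarrow> dvd_mod K n y p"
  unfolding dvd_mod_def using congO_trans by blast

lemma dvd_mod_add: "dvd_mod K n y p \<Longrightarrow> dvd_mod K n y q \<Longrightarrow> dvd_mod K n y (p + q)"
  unfolding dvd_mod_def by (metis congO_add distrib_left)

lemma dvd_mod_uminus: "dvd_mod K n y p \<Longrightarrow> dvd_mod K n y (- p)"
  unfolding dvd_mod_def by (metis congO_uminus mult_minus_right)

lemma dvd_mod_diff: "dvd_mod K n y p \<Longrightarrow> dvd_mod K n y q \<Longrightarrow> dvd_mod K n y (p - q)"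
  using dvd_mod_add[of K n y p "- q"] dvd_mod_uminus by fastforce

lemma dvd_mod_mult: "dvd_mod K n y p \<Longrightarrow> dvd_mod K n w q \<Longrightarrow> dvd_mod K n (y * w) (p * q)"
  unfolding dvd_mod_def by (metis congO_mult mult.assoc mult.left_commute)

lemma dvd_mod_mult_left: "dvd_mod K n y p \<Longrightarrow> dvd_mod K n y (q * p)"
  using dvd_mod_mult[of K n 1 q y p] by (simp add: dvd_modI[of K n q 1 q])

lemma dvd_mod_mult_right: "dvd_mod K n y p \<Longrightarrow> dvd_mod K n y (p * q)"
  using dvd_mod_mult_left[of K n y p q] by (simp add: mult.commute)

lemma dvd_mod_divisor_mult: "dvd_mod K n (y * w) p \<Longrightarrow> dvd_mod K n y p"
  unfolding dvd_mod_def by (metis mult.assoc)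

lemma dvd_mod_upi_pow_mono: "dvd_mod K n (upi ^ r) p \<Longrightarrow> r' \<le> r \<Longrightarrow> dvd_mod K n (upi ^ r') p"
  using dvd_mod_divisor_mult[of K n "upi ^ r'" "upi ^ (r - r')" p] by (simp flip: power_add)

lemma dvd_mod_mono: "dvd_mod K n y p \<Longrightarrow> n' \<le> n \<Longrightarrow> dvd_mod K n' y p"
  unfolding dvd_mod_def using congO_mono by blast

lemma congO_upi_square:
  assumes "minpoly K = [:2 * p, 2 * q, 1:]"
  shows "congO K n (upi ^ 2) (- smult 2 [:p, q:])"
  unfolding congO_def by (intro exI[of _ 0] exI[of _ 1]) (simp add: assms upi_def power2_eq_square)

lemma congO_upi_pow_double: "congO K n (upi ^ (2 * n)) 0"
proof -
  obtain p q where g: "minpoly K = [:2 * p, 2 * q, 1:]" using minpoly_Eisenstein by blast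
  have "congO K n ((upi ^ 2) ^ n) ((- smult 2 [:p, q:]) ^ n)"
    using congO_upi_square[OF g] by (rule congO_power)
  moreover have "(- smult 2 [:p, q:]) ^ n = smult (2 ^ n) ((- [:p, q:]) ^ n)"
    by (simp flip: smult_power add: power_minus)
  ultimately show ?thesis
    using congO_smult_2_pow congO_trans by (metis power_mult)
qed

lemma dvd_mod_upi_pow_imp_congO:
  assumes "dvd_mod K n (upi ^ r) p" and "2 * n \<le> r"
  shows "congO K n p 0"
proof -
  obtain z where "congO K n p (upi ^ (2 * n) * z)"
    using dvd_mod_upi_pow_mono[OF assms] dvd_mod_def by blast
  also have "congO K n \<dots> (0 * z)"
    using congO_upi_pow_double congO_refl by (rule congO_mult)
  finally show ?thesis by simp
qed

lemma odd_inverse_mod_2_pow: "odd (a :: int) \<Longrightarrow> \<exists>v w. a * v = 1 + 2 ^ n * w"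
proof -
  assume "odd a"
  then have "gcd a (2 ^ n) = 1" by (simp add: coprime_power_right_iff flip: coprime_iff_gcd_eq_1)
  with bezout_int[of a "2 ^ n"] obtain u v where "u * a + v * 2 ^ n = 1" by auto
  then show ?thesis by (intro exI[of _ u] exI[of _ "- v"]) (simp add: algebra_simps)
qed

text \<open>Modulo \<open>g\<close> we have \<open>\<pi>^2 = -2c\<close> with \<open>c = p + q\<pi>\<close>, and \<open>c\<close> is a unit modulo \<open>2^n\<close>
  because its norm \<open>c c' = p^2\<close> is odd.\<close>
lemma dvd_mod_two: "dvd_mod K n (upi ^ 2) 2"
proof -
  obtain p q where g: "minpoly K = [:2 * p, 2 * q, 1:]" and "odd p" using minpoly_Eisenstein by blast
  obtain v w where vw: "p ^ 2 * v = 1 + 2 ^ n * w"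
    using odd_inverse_mod_2_pow[of "p ^ 2" n] \<open>odd p\<close> by auto
  define c where "c = [:p, q:]"
  define c' where "c' = [:p - 2 * q ^ 2, - q:]"
  have norm: "c * c' = [:p ^ 2:] - smult (q ^ 2) (minpoly K)"
    unfolding c_def c'_def g by (simp add: algebra_simps power2_eq_square)
  have "congO K n (upi ^ 2 * smult (- v) c') (- smult 2 c * smult (- v) c')"
    using congO_upi_square[OF g] congO_refl unfolding c_def by (rule congO_mult)
  also have "- smult 2 c * smult (- v) c' = smult (2 * v) (c * c')"
    by (simp add: mult.commute)
  also have "\<dots> = [:2 * (p ^ 2 * v):] + minpoly K * [:- 2 * v * q ^ 2:]"
    unfolding norm by (simp add: algebra_simps smult_diff_right)
  also have "congO K n \<dots> 2"
    unfolding congO_def vw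
    by (intro exI[of _ "[:2 * w:]"] exI[of _ "[:- 2 * v * q ^ 2:]"]) (simp add: numeral_poly algebra_simps)
  finally show ?thesis by (metis congO_sym dvd_modI)
qed

lemma dvd_mod_two_mult:
  assumes "dvd_mod K n (upi ^ r) p"
  shows "dvd_mod K n (upi ^ (r + 2)) (2 * p)"
proof -
  have "dvd_mod K n (upi ^ r * upi ^ 2) (p * 2)" using assms dvd_mod_two by (rule dvd_mod_mult)
  then show ?thesis by (simp only: power_add mult.commute)
qed

lemma dvd_mod_two_pow: "dvd_mod K n (upi ^ (2 * j)) [:2 ^ j:]"
proof (induction j)
  case (Suc j)
  have "2 * [:2 ^ j:] = [:2 ^ Suc j :: int:]" by (simp add: numeral_poly)
  with dvd_mod_two_mult[OF Suc.IH] show ?case by (simp add: add.commute)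
qed (simp flip: one_pCons)

lemma dvd_mod_two_minus_upi_square: "dvd_mod K n (upi ^ 3) (2 - upi ^ 2)"
proof -
  obtain p q where g: "minpoly K = [:2 * p, 2 * q, 1:]" and "odd p" using minpoly_Eisenstein by blast
  then obtain e where e: "p = 2 * e + 1" by (blast elim: oddE)
  have "congO K n (2 - upi ^ 2) (2 - - smult 2 [:p, q:])"
    using congO_refl congO_upi_square[OF g] by (rule congO_diff)
  also have "2 - - smult 2 [:p, q:] = 2 * (2 * [:e + 1:]) + 2 * (upi ^ 1 * [:q:])"
    by (simp add: e upi_def numeral_poly algebra_simps)
  finally have cong: "congO K n (2 - upi ^ 2) (2 * (2 * [:e + 1:]) + 2 * (upi ^ 1 * [:q:]))" .
  have "dvd_mod K n (upi ^ 3) (2 * (upi ^ 1 * [:q:]))"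
    using dvd_mod_two_mult[OF dvd_mod_triv] by (rule dvd_mod_upi_pow_mono) simp
  moreover have "dvd_mod K n (upi ^ 3) (2 * (2 * [:e + 1:]))"
    using dvd_mod_two_mult[OF dvd_mod_two_mult, of K n 0 "[:e + 1:]"]
    by (rule dvd_mod_upi_pow_mono) simp_all
  ultimately show ?thesis using cong by (metis add.commute dvd_mod_add dvd_mod_cong)
qed

lemma dvd_mod_of_congO:
  assumes "congO K n0 p q" and "r \<le> 2 * n0"
  shows "dvd_mod K n (upi ^ r) (p - q)"
proof -
  obtain h k where "p - q = [:2 ^ n0:] * h + minpoly K * k" using assms(1) unfolding congO_def by auto
  moreover have "dvd_mod K n (upi ^ r) ([:2 ^ n0:] * h)"
    using dvd_mod_upi_pow_mono[OF dvd_mod_two_pow assms(2)] by (rule dvd_mod_mult_right)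
  moreover have "congO K n (minpoly K * k) 0" by (rule congO_minpoly)
  ultimately show ?thesis by (metis add.right_neutral congO_add congO_refl dvd_mod_cong)
qed

lemma dvd_mod_upi_pow_lift:
  assumes "dvd_mod K n0 (upi ^ r) p" and "r \<le> 2 * n0"
  shows "dvd_mod K n (upi ^ r) p"
proof -
  obtain z where "congO K n0 p (upi ^ r * z)" using assms(1) dvd_mod_def by blast
  then have "dvd_mod K n (upi ^ r) (p - upi ^ r * z)" using assms(2) by (rule dvd_mod_of_congO)
  from dvd_mod_add[OF this dvd_mod_triv[of K n "upi ^ r" z]] show ?thesis by simp
qed

lemma dvd_mod_upi_pow_digit:
  assumes "dvd_mod K n (upi ^ N) p"
  shows "dvd_mod K n (upi ^ Suc N) p \<or> dvd_mod K n (upi ^ Suc N) (p - upi ^ N)"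
proof -
  obtain z0 z where p: "congO K n p (upi ^ N * pCons z0 z)"
    using assms dvd_mod_def by (metis pCons_cases)
  define e b where "e = z0 div 2" and "b = z0 mod 2"
  then have z0: "z0 = 2 * e + b" and b: "b = 0 \<or> b = 1" by presburger+
  define R where "R = 2 * (upi ^ N * [:e:]) + upi ^ Suc N * z"
  have "upi ^ N * pCons z0 z = upi ^ N * [:b:] + R"
    unfolding z0 R_def upi_def by (simp add: algebra_simps numeral_poly smult_add_left)
  with p have p: "congO K n p (upi ^ N * [:b:] + R)" by simp
  have "dvd_mod K n (upi ^ Suc N) (2 * (upi ^ N * [:e:]))"
    using dvd_mod_two_mult[OF dvd_mod_triv] by (rule dvd_mod_upi_pow_mono) simp
  then have R: "dvd_mod K n (upi ^ Suc N) R"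
    unfolding R_def by (intro dvd_mod_add dvd_mod_triv)
  from b show ?thesis
  proof
    assume "b = 0"
    then show ?thesis using dvd_mod_cong[OF p] R by simp
  next
    assume "b = 1"
    then have "congO K n (p - upi ^ N) R" using congO_diff[OF p congO_refl[of K n "upi ^ N"]] by simp
    then show ?thesis using R dvd_mod_cong by blast
  qed
qed

section \<open>The norm argument\<close>

definition int_eval :: "complex \<Rightarrow> int poly \<Rightarrow> complex" where
  "int_eval \<alpha> p = poly (map_poly of_int p) \<alpha>"

lemma int_eval_add [simp]: "int_eval \<alpha> (p + q) = int_eval \<alpha> p + int_eval \<alpha> q"
proof -
  have "map_poly (of_int :: int \<Rightarrow> complex) (p + q) = map_poly of_int p + map_poly of_int q"
    by (intro poly_eqI) (simp add: coeff_map_poly)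
  then show ?thesis unfolding int_eval_def by simp
qed

lemma int_eval_mult [simp]: "int_eval \<alpha> (p * q) = int_eval \<alpha> p * int_eval \<alpha> q"
proof -
  have "map_poly (of_int :: int \<Rightarrow> complex) (p * q) = map_poly of_int p * map_poly of_int q"
    by (intro poly_eqI) (simp add: coeff_map_poly coeff_mult)
  then show ?thesis unfolding int_eval_def by simp
qed

lemma int_eval_pCons [simp]: "int_eval \<alpha> (pCons c p) = of_int c + \<alpha> * int_eval \<alpha> p"
  unfolding int_eval_def by (simp add: map_poly_pCons)

lemma int_eval_0 [simp]: "int_eval \<alpha> 0 = 0"
  unfolding int_eval_def by simp

lemma int_eval_1 [simp]: "int_eval \<alpha> 1 = 1"
  unfolding int_eval_def by simp

lemma int_eval_uminus [simp]: "int_eval \<alpha> (- p) = - int_eval \<alpha> p"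
proof -
  have "map_poly (of_int :: int \<Rightarrow> complex) (- p) = - map_poly of_int p"
    by (intro poly_eqI) (simp add: coeff_map_poly)
  then show ?thesis unfolding int_eval_def by simp
qed

lemma int_eval_diff [simp]: "int_eval \<alpha> (p - q) = int_eval \<alpha> p - int_eval \<alpha> q"
  using int_eval_add[of \<alpha> p "- q"] by simp

lemma int_eval_smult [simp]: "int_eval \<alpha> (smult c p) = of_int c * int_eval \<alpha> p"
  using int_eval_mult[of \<alpha> "[:c:]" p] by simp

lemma int_eval_power [simp]: "int_eval \<alpha> (p ^ k) = int_eval \<alpha> p ^ k"
  by (induction k) simp_all

lemma int_eval_upi [simp]: "int_eval \<alpha> upi = \<alpha>"
  unfolding upi_def by simp

lemma int_eval_conjugates:
  fixes \<alpha> \<beta> :: complex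
  assumes "\<alpha> + \<beta> = of_int s" and "\<alpha> * \<beta> = of_int r" and "even r"
  shows "\<exists>a b. int_eval \<alpha> f = of_int a + of_int b * \<alpha> \<and> int_eval \<beta> f = of_int a + of_int b * \<beta>
    \<and> even (a - coeff f 0)"
proof (induction f)
  case (pCons c f)
  then obtain a b where ab: "int_eval \<alpha> f = of_int a + of_int b * \<alpha>" "int_eval \<beta> f = of_int a + of_int b * \<beta>"
    by blast
  have step: "int_eval \<gamma> (pCons c f) = of_int (c - b * r) + of_int (a + b * s) * \<gamma>"
    if "\<gamma> = \<alpha> \<or> \<gamma> = \<beta>" and "int_eval \<gamma> f = of_int a + of_int b * \<gamma>" for \<gamma>
  proof -
    have "\<gamma> * \<gamma> = (\<alpha> + \<beta>) * \<gamma> - \<alpha> * \<beta>" using that(1) by (auto simp: algebra_simps)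
    then have quad: "\<gamma> * \<gamma> = of_int s * \<gamma> - of_int r" unfolding assms(1,2) .
    have "int_eval \<gamma> (pCons c f) = of_int c + of_int a * \<gamma> + of_int b * (\<gamma> * \<gamma>)"
      using that(2) by (simp add: algebra_simps)
    also have "\<dots> = of_int (c - b * r) + of_int (a + b * s) * \<gamma>"
      unfolding quad by (simp add: algebra_simps)
    finally show ?thesis .
  qed
  with ab assms(3) show ?case by (intro exI[of _ "c - b * r"] exI[of _ "a + b * s"]) auto
qed (intro exI[of _ 0], simp)

lemma int_eval_norm:
  fixes \<alpha> \<beta> :: complex
  assumes "\<alpha> + \<beta> = of_int s" and "\<alpha> * \<beta> = of_int r" and "even s" and "even r"
  shows "\<exists>Q. int_eval \<alpha> f * int_eval \<beta> f = of_int Q \<and> even (Q - coeff f 0)"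
proof -
  obtain a b where ab: "int_eval \<alpha> f = of_int a + of_int b * \<alpha>" "int_eval \<beta> f = of_int a + of_int b * \<beta>"
    and "even (a - coeff f 0)"
    using int_eval_conjugates[OF assms(1,2,4)] by blast
  have "int_eval \<alpha> f * int_eval \<beta> f = of_int a ^ 2 + of_int a * of_int b * (\<alpha> + \<beta>) + of_int b ^ 2 * (\<alpha> * \<beta>)"
    unfolding ab by (simp add: algebra_simps power2_eq_square)
  also have "\<dots> = of_int (a ^ 2 + a * b * s + b ^ 2 * r)" unfolding assms(1,2) by simp
  finally show ?thesis
    using \<open>even (a - coeff f 0)\<close> assms(3,4) by (intro exI[of _ "a ^ 2 + a * b * s + b ^ 2 * r"]) auto
qed

lemma minpoly_conjugate_roots:
  assumes "minpoly K = [:2 * p, 2 * q, 1:]"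
  obtains \<alpha> \<beta> :: complex where "\<alpha> + \<beta> = of_int (- 2 * q)" and "\<alpha> * \<beta> = of_int (2 * p)"
    and "int_eval \<alpha> (minpoly K) = 0" and "int_eval \<beta> (minpoly K) = 0"
proof -
  define D where "D = csqrt (of_int (q ^ 2 - 2 * p))"
  define \<alpha> \<beta> where "\<alpha> = - of_int q + D" and "\<beta> = - of_int q - D"
  have sum: "\<alpha> + \<beta> = of_int (- 2 * q)" unfolding \<alpha>_def \<beta>_def by simp
  have "\<alpha> * \<beta> = of_int q ^ 2 - D ^ 2" unfolding \<alpha>_def \<beta>_def by (simp add: algebra_simps power2_eq_square)
  then have prod: "\<alpha> * \<beta> = of_int (2 * p)" unfolding D_def by simp
  have "int_eval \<gamma> (minpoly K) = 0" if "\<gamma> = \<alpha> \<or> \<gamma> = \<beta>" for \<gamma>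
  proof -
    have "int_eval \<gamma> (minpoly K) = \<gamma> * \<gamma> - (\<alpha> + \<beta>) * \<gamma> + \<alpha> * \<beta>"
      unfolding assms sum prod by (simp add: algebra_simps)
    also have "\<dots> = 0" using that by (auto simp: algebra_simps)
    finally show ?thesis .
  qed
  with sum prod that show ?thesis by blast
qed

text \<open>Evaluating \<open>\<pi>^N (1 - \<pi> z) \<equiv> 0 (mod (2^n, g))\<close> at both roots of \<open>g\<close> and multiplying
  gives \<open>(2p)^N Q = 4^n H\<close> in \<open>\<int>\<close> with \<open>Q\<close> the odd norm of \<open>1 - \<pi> z\<close>.\<close>
lemma not_dvd_mod_upi_pow_Suc:
  assumes "N < 2 * n"
  shows "\<not> dvd_mod K n (upi ^ Suc N) (upi ^ N)"
proof
  assume "dvd_mod K n (upi ^ Suc N) (upi ^ N)"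
  then obtain z h k where "upi ^ N - upi ^ Suc N * z = smult (2 ^ n) h + minpoly K * k"
    unfolding dvd_mod_def congO_def by blast
  then have eq: "upi ^ N * (1 - upi * z) = smult (2 ^ n) h + minpoly K * k"
    by (simp add: algebra_simps)
  obtain p q where g: "minpoly K = [:2 * p, 2 * q, 1:]" and "odd p" using minpoly_Eisenstein by blast
  obtain \<alpha> \<beta> where sum: "\<alpha> + \<beta> = of_int (- 2 * q)" and prod: "\<alpha> * \<beta> = of_int (2 * p)"
    and roots: "int_eval \<alpha> (minpoly K) = 0" "int_eval \<beta> (minpoly K) = 0"
    using minpoly_conjugate_roots[OF g] .
  obtain Q where Q: "int_eval \<alpha> (1 - upi * z) * int_eval \<beta> (1 - upi * z) = of_int Q" "odd Q"
    using int_eval_norm[OF sum prod, of "1 - upi * z"] by (auto simp: upi_def)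
  obtain H where H: "int_eval \<alpha> h * int_eval \<beta> h = of_int H"
    using int_eval_norm[OF sum prod] by auto
  have "(\<alpha> * \<beta>) ^ N * (int_eval \<alpha> (1 - upi * z) * int_eval \<beta> (1 - upi * z))
      = (\<alpha> ^ N * int_eval \<alpha> (1 - upi * z)) * (\<beta> ^ N * int_eval \<beta> (1 - upi * z))"
    by (simp add: power_mult_distrib algebra_simps)
  also have "\<dots> = (2 ^ n * int_eval \<alpha> h) * (2 ^ n * int_eval \<beta> h)"
    using arg_cong[OF eq, of "int_eval \<alpha>"] arg_cong[OF eq, of "int_eval \<beta>"] roots by simp
  also have "\<dots> = of_int (2 ^ n * 2 ^ n) * (int_eval \<alpha> h * int_eval \<beta> h)"
    by (simp add: algebra_simps)
  finally have "of_int ((2 * p) ^ N * Q) = (of_int (2 ^ n * 2 ^ n * H) :: complex)"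
    unfolding prod Q(1) H by simp
  then have "(2 * p) ^ N * Q = 2 ^ n * 2 ^ n * H" by (simp only: of_int_eq_iff)
  moreover have "(2 :: int) ^ n * 2 ^ n = 2 ^ N * 2 ^ (2 * n - N)"
    using assms by (simp flip: power_add mult_2)
  ultimately have "2 ^ N * (p ^ N * Q) = 2 ^ N * (2 ^ (2 * n - N) * H)"
    by (simp add: power_mult_distrib algebra_simps)
  then have "p ^ N * Q = 2 ^ (2 * n - N) * H" by simp
  moreover have "even (2 ^ (2 * n - N) * H :: int)" using assms by simp
  ultimately have "even (p ^ N * Q)" by metis
  then show False using \<open>odd p\<close> \<open>odd Q\<close> by simp
qed

lemma is_O_coherent:
  assumes "is_O K x" and "n0 \<le> n"
  shows "congO K n0 (x n) (x n0)"
  using assms(2)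
proof (induction n rule: dec_induct)
  case (step n)
  have "congO K n0 (x (Suc n)) (x n)"
    using assms(1) step.hyps unfolding is_O_def by (blast intro: congO_mono)
  then show ?case using step.IH by (rule congO_trans)
qed simp

lemma is_O_const [simp]: "is_O K (\<lambda>n. c)"
  unfolding is_O_def by simp

lemma is_O_add [simp]: "is_O K x \<Longrightarrow> is_O K y \<Longrightarrow> is_O K (\<lambda>n. x n + y n)"
  unfolding is_O_def by (blast intro: congO_add)

lemma is_O_diff [simp]: "is_O K x \<Longrightarrow> is_O K y \<Longrightarrow> is_O K (\<lambda>n. x n - y n)"
  unfolding is_O_def by (blast intro: congO_diff)

lemma is_O_mult [simp]: "is_O K x \<Longrightarrow> is_O K y \<Longrightarrow> is_O K (\<lambda>n. x n * y n)"
  unfolding is_O_def by (blast intro: congO_mult)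

lemma is_O_power [simp]: "is_O K x \<Longrightarrow> is_O K (\<lambda>n. x n ^ k)"
  unfolding is_O_def by (blast intro: congO_power)

lemma dvdO_add: "dvdO K y a \<Longrightarrow> dvdO K y b \<Longrightarrow> dvdO K y (\<lambda>n. a n + b n)"
  unfolding dvdO_iff_dvd_mod by (blast intro: dvd_mod_add)

lemma dvdO_diff: "dvdO K y a \<Longrightarrow> dvdO K y b \<Longrightarrow> dvdO K y (\<lambda>n. a n - b n)"
  unfolding dvdO_iff_dvd_mod by (blast intro: dvd_mod_diff)

lemma dvdO_mult_left: "dvdO K y a \<Longrightarrow> dvdO K y (\<lambda>n. c n * a n)"
  unfolding dvdO_iff_dvd_mod by (blast intro: dvd_mod_mult_left)

lemma dvdO_mult: "dvdO K y a \<Longrightarrow> dvdO K w b \<Longrightarrow> dvdO K (y * w) (\<lambda>n. a n * b n)"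
  unfolding dvdO_iff_dvd_mod by (blast intro: dvd_mod_mult)

lemma dvdO_triv [simp]: "dvdO K y (\<lambda>n. y * c n)"
  unfolding dvdO_iff_dvd_mod by simp

lemma dvdO_zero [simp]: "dvdO K y (\<lambda>n. 0)"
  using dvdO_triv[of K y "\<lambda>n. 0"] by simp

lemma dvdO_upi_pow_mono: "dvdO K (upi ^ r) x \<Longrightarrow> r' \<le> r \<Longrightarrow> dvdO K (upi ^ r') x"
  unfolding dvdO_iff_dvd_mod by (blast intro: dvd_mod_upi_pow_mono)

lemma dvdO_two_mult: "dvdO K (upi ^ r) x \<Longrightarrow> dvdO K (upi ^ (r + 2)) (\<lambda>n. 2 * x n)"
  unfolding dvdO_iff_dvd_mod by (blast intro: dvd_mod_two_mult)

lemma dvdO_upi_pow_imp_congO: "dvdO K (upi ^ r) x \<Longrightarrow> 2 * n \<le> r \<Longrightarrow> congO K n (x n) 0"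
  unfolding dvdO_iff_dvd_mod by (blast intro: dvd_mod_upi_pow_imp_congO)

lemma not_dvdO_upi_pow_Suc: "\<not> dvdO K (upi ^ Suc N) (\<lambda>n. upi ^ N)"
  unfolding dvdO_iff_dvd_mod using not_dvd_mod_upi_pow_Suc[of N "Suc N"] by auto

lemma dvdO_upi_pow_of_dvd_mod:
  assumes "is_O K x" and "r \<le> 2 * n0" and "dvd_mod K n0 (upi ^ r) (x n0)"
  shows "dvdO K (upi ^ r) x"
  unfolding dvdO_iff_dvd_mod
proof
  fix n
  show "dvd_mod K n (upi ^ r) (x n)"
  proof (cases "n \<le> n0")
    case True
    have "congO K n (x n) (x n0)" using is_O_coherent[OF assms(1) True] by (rule congO_sym)
    then show ?thesis using dvd_mod_mono[OF assms(3) True] by (rule dvd_mod_cong)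
  next
    case False
    then have "dvd_mod K n (upi ^ r) (x n - x n0)"
      using is_O_coherent[OF assms(1), of n0 n] assms(2) by (intro dvd_mod_of_congO) simp_all
    moreover have "dvd_mod K n (upi ^ r) (x n0)" using assms(3,2) by (rule dvd_mod_upi_pow_lift)
    ultimately show ?thesis using dvd_mod_add by fastforce
  qed
qed

lemma dvdO_upi_pow_digit:
  assumes "is_O K x" and "dvdO K (upi ^ N) x"
  shows "dvdO K (upi ^ Suc N) x \<or> dvdO K (upi ^ Suc N) (\<lambda>n. x n - upi ^ N)"
proof -
  have "dvd_mod K (Suc N) (upi ^ Suc N) (x (Suc N)) \<or> dvd_mod K (Suc N) (upi ^ Suc N) (x (Suc N) - upi ^ N)"
    using assms(2) dvd_mod_upi_pow_digit unfolding dvdO_iff_dvd_mod by blast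
  then show ?thesis
    using dvdO_upi_pow_of_dvd_mod[of K _ "Suc N" "Suc N"] assms(1) by fastforce
qed

text \<open>As the residue field is \<open>F\<^sub>2\<close>, for \<open>x \<in> O\<close> this says exactly that \<open>v(x) = N\<close>.\<close>
definition val_eq :: "ramified_case \<Rightarrow> nat \<Rightarrow> (nat \<Rightarrow> int poly) \<Rightarrow> bool" where
  "val_eq K N x \<longleftrightarrow> dvdO K (upi ^ Suc N) (\<lambda>n. x n - upi ^ N)"

lemma val_eq_imp_dvdO:
  assumes "val_eq K N x"
  shows "dvdO K (upi ^ N) x"
proof -
  have "dvdO K (upi ^ N) (\<lambda>n. x n - upi ^ N)"
    using assms unfolding val_eq_def by (rule dvdO_upi_pow_mono) simp
  then have "dvdO K (upi ^ N) (\<lambda>n. (x n - upi ^ N) + upi ^ N * 1)"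
    by (rule dvdO_add[OF _ dvdO_triv])
  then show ?thesis by simp
qed

lemma val_eqI: "is_O K x \<Longrightarrow> dvdO K (upi ^ N) x \<Longrightarrow> \<not> dvdO K (upi ^ Suc N) x \<Longrightarrow> val_eq K N x"
  unfolding val_eq_def using dvdO_upi_pow_digit by blast

lemma val_eq_upi_pow [simp]: "val_eq K N (\<lambda>n. upi ^ N)"
  unfolding val_eq_def using dvdO_triv[of K _ "\<lambda>n. 0"] by simp

lemma val_eq_add_dvdO:
  assumes "val_eq K N x" and "dvdO K (upi ^ Suc N) y"
  shows "val_eq K N (\<lambda>n. x n + y n)"
proof -
  have "dvdO K (upi ^ Suc N) (\<lambda>n. (x n - upi ^ N) + y n)"
    using assms unfolding val_eq_def by (rule dvdO_add)
  then show ?thesis unfolding val_eq_def by (simp add: algebra_simps)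
qed

lemma val_eq_mult:
  assumes "val_eq K a x" and "val_eq K b y"
  shows "val_eq K (a + b) (\<lambda>n. x n * y n)"
proof -
  have "dvdO K (upi ^ Suc a * upi ^ b) (\<lambda>n. (x n - upi ^ a) * y n)"
    using assms(1) val_eq_imp_dvdO[OF assms(2)] unfolding val_eq_def by (rule dvdO_mult)
  moreover have "dvdO K (upi ^ a * upi ^ Suc b) (\<lambda>n. upi ^ a * (y n - upi ^ b))"
    using assms(2) unfolding val_eq_def by (rule dvdO_mult[OF dvdO_triv[of K _ "\<lambda>n. 1", simplified]])
  ultimately have "dvdO K (upi ^ Suc (a + b)) (\<lambda>n. (x n - upi ^ a) * y n + upi ^ a * (y n - upi ^ b))"
    by (intro dvdO_add) (simp_all add: ac_simps power_add)
  then show ?thesis unfolding val_eq_def by (simp add: algebra_simps power_add)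
qed

lemma val_eq_power: "val_eq K a x \<Longrightarrow> val_eq K (a * k) (\<lambda>n. x n ^ k)"
proof (induction k)
  case (Suc k)
  then show ?case using val_eq_mult[OF Suc.prems Suc.IH[OF Suc.prems]] by simp
qed (use val_eq_upi_pow[of K 0] in simp)

lemma val_eq_two: "val_eq K 2 (\<lambda>n. 2)"
  unfolding val_eq_def dvdO_iff_dvd_mod using dvd_mod_two_minus_upi_square by (simp add: numeral_3_eq_3)

lemma dvdO_add_of_val_eq:
  assumes "val_eq K N x" and "val_eq K N y"
  shows "dvdO K (upi ^ Suc N) (\<lambda>n. x n + y n)"
proof -
  have "dvdO K (upi ^ (N + 2)) (\<lambda>n. 2 * upi ^ N)"
    using dvdO_two_mult[OF dvdO_triv[of K "upi ^ N" "\<lambda>n. 1"]] by simp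
  then have "dvdO K (upi ^ Suc N) (\<lambda>n. 2 * upi ^ N)" by (rule dvdO_upi_pow_mono) simp
  then have "dvdO K (upi ^ Suc N) (\<lambda>n. (x n - upi ^ N) + (y n - upi ^ N) + 2 * upi ^ N)"
    using assms unfolding val_eq_def by (intro dvdO_add)
  then show ?thesis by (simp add: algebra_simps)
qed

lemma dvdO_binomial_remainder:
  assumes "dvdO K (upi ^ a) w"
  shows "dvdO K (upi ^ (2 * a)) (\<lambda>n. (1 + w n) ^ k - 1 - of_nat k * w n)"
proof (induction k)
  case (Suc k)
  have "dvdO K (upi ^ a * upi ^ a) (\<lambda>n. w n * w n)" using assms assms by (rule dvdO_mult)
  then have "dvdO K (upi ^ (2 * a)) (\<lambda>n. of_nat k * (w n * w n))"
    by (simp add: mult_2 power_add dvdO_mult_left)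
  with dvdO_mult_left[OF Suc.IH]
  have "dvdO K (upi ^ (2 * a)) (\<lambda>n. (1 + w n) * ((1 + w n) ^ k - 1 - of_nat k * w n) + of_nat k * (w n * w n))"
    by (rule dvdO_add)
  then show ?case by (simp add: algebra_simps)
qed (simp add: dvdO_triv[of K _ "\<lambda>n. 0", simplified])

lemma val_eq_odd_power_minus_one:
  assumes "odd m" and "1 \<le> a" and "val_eq K a w"
  shows "val_eq K a (\<lambda>n. (1 + w n) ^ m - 1)"
proof -
  obtain j where m: "m = 2 * j + 1" using \<open>odd m\<close> oddE by blast
  have w: "dvdO K (upi ^ a) w" using assms(3) by (rule val_eq_imp_dvdO)
  have "dvdO K (upi ^ Suc a) (\<lambda>n. (1 + w n) ^ m - 1 - of_nat m * w n)"
    using dvdO_binomial_remainder[OF w] by (rule dvdO_upi_pow_mono) (use assms(2) in simp)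
  moreover have "dvdO K (upi ^ Suc a) (\<lambda>n. 2 * (of_nat j * w n))"
    using dvdO_two_mult[OF dvdO_mult_left[OF w]] by (rule dvdO_upi_pow_mono) simp
  ultimately have "dvdO K (upi ^ Suc a) (\<lambda>n. ((1 + w n) ^ m - 1 - of_nat m * w n) + 2 * (of_nat j * w n))"
    by (rule dvdO_add)
  then have "val_eq K a (\<lambda>n. w n + (((1 + w n) ^ m - 1 - of_nat m * w n) + 2 * (of_nat j * w n)))"
    using assms(3) by (rule val_eq_add_dvdO[rotated])
  then show ?thesis by (simp add: m algebra_simps)
qed

lemma val_eq_one_plus_even_power_minus_one:
  assumes "odd m" and "1 \<le> a" and "val_eq K a (\<lambda>n. 2 * z n + z n ^ 2)"
  shows "val_eq K a (\<lambda>n. (1 + z n) ^ (2 * m) - 1)"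
proof -
  have "(1 + z n) ^ 2 = 1 + (2 * z n + z n ^ 2)" for n
    by (simp add: power2_eq_square algebra_simps)
  then have "(1 + z n) ^ (2 * m) = (1 + (2 * z n + z n ^ 2)) ^ m" for n
    by (simp add: power_mult)
  then show ?thesis using val_eq_odd_power_minus_one[OF assms] by simp
qed

lemma val_eq_one_plus_upi_power: "odd m \<Longrightarrow> val_eq K 2 (\<lambda>n. (1 + upi) ^ (2 * m) - 1)"
proof -
  have "val_eq K 2 (\<lambda>n. upi ^ 2 + 2 * upi)"
    by (rule val_eq_add_dvdO[OF val_eq_upi_pow])
      (use dvdO_two_mult[OF dvdO_triv[of K "upi ^ 1" "\<lambda>n. 1"]] in \<open>simp add: numeral_3_eq_3\<close>)
  moreover assume "odd m"
  ultimately show ?thesis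
    using val_eq_one_plus_even_power_minus_one[of m 2 K "\<lambda>n. upi"] by (simp add: add.commute)
qed

lemma val_eq_one_plus_upi_pow_power:
  assumes "odd m" and "3 \<le> j"
  shows "val_eq K (j + 2) (\<lambda>n. (1 + upi ^ j) ^ (2 * m) - 1)"
proof -
  have "val_eq K (2 + j) (\<lambda>n. 2 * upi ^ j)" using val_eq_two val_eq_upi_pow by (rule val_eq_mult)
  moreover have "dvdO K (upi ^ Suc (j + 2)) (\<lambda>n. upi ^ Suc (j + 2) * upi ^ (j - 3))" by (rule dvdO_triv)
  ultimately have "val_eq K (j + 2) (\<lambda>n. 2 * upi ^ j + upi ^ Suc (j + 2) * upi ^ (j - 3))"
    by (simp add: add.commute val_eq_add_dvdO)
  moreover have "Suc (j + 2) + (j - 3) = j * 2" using assms(2) by simp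
  then have "upi ^ Suc (j + 2) * upi ^ (j - 3) = (upi ^ j) ^ 2"
    by (simp only: power_add[symmetric] power_mult)
  ultimately show ?thesis using val_eq_one_plus_even_power_minus_one[OF assms(1)] by simp
qed

section \<open>Clearing digits and Hensel lifting\<close>

lemma dvdO_digit_choice:
  assumes "is_O K S" and "dvdO K (upi ^ N) S" and "val_eq K N T"
  shows "dvdO K (upi ^ Suc N) S \<or> dvdO K (upi ^ Suc N) (\<lambda>n. S n + T n)"
  using dvdO_upi_pow_digit[OF assms(1,2)] dvdO_add_of_val_eq[OF _ assms(3)] unfolding val_eq_def by blast

lemma dvdO_power_choice:
  assumes "is_O K S" and "is_O K C" and "dvdO K (upi ^ N) (\<lambda>n. S n + C n * u0 ^ d)"
    and "val_eq K N (\<lambda>n. C n * (u1 ^ d - u0 ^ d))"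
  shows "\<exists>u\<in>{u0, u1}. dvdO K (upi ^ Suc N) (\<lambda>n. S n + C n * u ^ d)"
proof -
  have "is_O K (\<lambda>n. S n + C n * u0 ^ d)" using assms(1,2) by simp
  from dvdO_digit_choice[OF this assms(3,4)] show ?thesis
  proof
    assume "dvdO K (upi ^ Suc N) (\<lambda>n. S n + C n * u0 ^ d + C n * (u1 ^ d - u0 ^ d))"
    then have "dvdO K (upi ^ Suc N) (\<lambda>n. S n + C n * u1 ^ d)" by (simp add: algebra_simps)
    then show ?thesis by blast
  qed blast
qed

lemma val_eq_one_plus_upi_pow: "0 < j \<Longrightarrow> val_eq K 0 (\<lambda>n. 1 + upi ^ j)"
  using val_eq_add_dvdO[OF val_eq_upi_pow[of K 0] dvdO_upi_pow_mono[OF dvdO_triv[of K "upi ^ j" "\<lambda>n. 1"]]]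
  by simp

text \<open>As \<open>v(d) = 2\<close>, replacing \<open>y\<close> by \<open>y (1 + \<pi>^(j+3))\<close> changes \<open>A y^d\<close> by an element of
  valuation exactly \<open>v(A) + j + 5\<close>.\<close>
lemma hensel_step:
  assumes "odd m" and "is_O K A" and "is_O K B" and "val_eq K N A"
    and "is_O K y" and "val_eq K 0 y"
    and "dvdO K (upi ^ (N + 5 + j)) (\<lambda>n. A n * y n ^ (2 * m) + B n)"
  shows "\<exists>y'. (is_O K y' \<and> val_eq K 0 y'
      \<and> dvdO K (upi ^ (N + 5 + Suc j)) (\<lambda>n. A n * y' n ^ (2 * m) + B n))
      \<and> dvdO K (upi ^ j) (\<lambda>n. y' n - y n)"
proof -
  define C where "C = (\<lambda>n. A n * y n ^ (2 * m))"
  have "val_eq K (N + 0 * (2 * m) + (j + 3 + 2)) (\<lambda>n. C n * ((1 + upi ^ (j + 3)) ^ (2 * m) - 1))"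
    unfolding C_def using assms(1,4,6)
    by (intro val_eq_mult val_eq_power val_eq_one_plus_upi_pow_power) simp_all
  then have val: "val_eq K (N + 5 + j) (\<lambda>n. C n * ((1 + upi ^ (j + 3)) ^ (2 * m) - 1 ^ (2 * m)))"
    by (simp add: add.commute add.left_commute)
  have dvd: "dvdO K (upi ^ (N + 5 + j)) (\<lambda>n. B n + C n * 1 ^ (2 * m))"
    using assms(7) unfolding C_def by (simp add: add.commute)
  have "is_O K C" unfolding C_def using assms(2,5) by simp
  with assms(3) dvd val obtain u where u: "u \<in> {1, 1 + upi ^ (j + 3)}"
    and zero: "dvdO K (upi ^ Suc (N + 5 + j)) (\<lambda>n. B n + C n * u ^ (2 * m))"
    by (blast dest: dvdO_power_choice)
  show ?thesis
  proof (intro exI conjI)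
    show "is_O K (\<lambda>n. y n * u)" using assms(5) by simp
    have "val_eq K 0 (\<lambda>n. u)"
      using u val_eq_one_plus_upi_pow[of "j + 3" K] val_eq_upi_pow[of K 0] by auto
    from val_eq_mult[OF assms(6) this] show "val_eq K 0 (\<lambda>n. y n * u)" by simp
    show "dvdO K (upi ^ (N + 5 + Suc j)) (\<lambda>n. A n * (y n * u) ^ (2 * m) + B n)"
      using zero unfolding C_def by (simp add: power_mult_distrib algebra_simps)
    have "dvdO K (upi ^ j) (\<lambda>n. y n * (u - 1))"
      using u dvdO_mult_left[OF dvdO_upi_pow_mono[OF dvdO_triv[of K "upi ^ (j + 3)" "\<lambda>n. 1"]]]
      by auto
    then show "dvdO K (upi ^ j) (\<lambda>n. y n * u - y n)" by (simp add: algebra_simps)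
  qed
qed

lemma is_O_diagonal:
  assumes "\<And>j. is_O K (Y j)" and "\<And>j. dvdO K (upi ^ j) (\<lambda>n. Y (Suc j) n - Y j n)"
  shows "is_O K (\<lambda>n. Y (2 * n) n)"
  unfolding is_O_def
proof
  fix n
  have step: "congO K n (Y (Suc (Suc (2 * n))) (Suc n)) (Y (Suc (Suc (2 * n))) n)"
    using assms(1)[of "Suc (Suc (2 * n))"] unfolding is_O_def by blast
  have "dvdO K (upi ^ (2 * n))
      (\<lambda>k. (Y (Suc (Suc (2 * n))) k - Y (Suc (2 * n)) k) + (Y (Suc (2 * n)) k - Y (2 * n) k))"
    by (intro dvdO_add dvdO_upi_pow_mono[OF assms(2)]) simp_all
  then have "dvdO K (upi ^ (2 * n)) (\<lambda>k. Y (Suc (Suc (2 * n))) k - Y (2 * n) k)" by simp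
  then have "congO K n (Y (Suc (Suc (2 * n))) n - Y (2 * n) n) 0"
    by (rule dvdO_upi_pow_imp_congO) simp
  then have "congO K n (Y (Suc (Suc (2 * n))) n) (Y (2 * n) n)" by (rule congO_by_diff)
  with step show "congO K n (Y (2 * Suc n) (Suc n)) (Y (2 * n) n)"
    by (simp add: congO_trans)
qed

lemma hensel_lift:
  assumes "odd m" and "is_O K A" and "is_O K B" and "val_eq K N A"
    and "is_O K y0" and "val_eq K 0 y0" and "dvdO K (upi ^ (N + 5)) (\<lambda>n. A n * y0 n ^ (2 * m) + B n)"
  shows "\<exists>y. is_O K y \<and> (\<forall>n. congO K n (A n * y n ^ (2 * m) + B n) 0)"
proof -
  define P where "P j y \<longleftrightarrow> is_O K y \<and> val_eq K 0 y
    \<and> dvdO K (upi ^ (N + 5 + j)) (\<lambda>n. A n * y n ^ (2 * m) + B n)" for j y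
  have "\<exists>Y. \<forall>j. P j (Y j) \<and> dvdO K (upi ^ j) (\<lambda>n. Y (Suc j) n - Y j n)"
  proof (rule dependent_nat_choice)
    show "\<exists>y. P 0 y" using assms(5-7) unfolding P_def by auto
    show "\<exists>y'. P (Suc j) y' \<and> dvdO K (upi ^ j) (\<lambda>n. y' n - y n)" if "P j y" for j y
      using that hensel_step[OF assms(1-4), of y j] unfolding P_def by blast
  qed
  then obtain Y where P: "\<And>j. P j (Y j)" and diff: "\<And>j. dvdO K (upi ^ j) (\<lambda>n. Y (Suc j) n - Y j n)"
    by blast
  have "is_O K (\<lambda>n. Y (2 * n) n)"
    by (rule is_O_diagonal) (use P diff in \<open>simp_all add: P_def\<close>)
  moreover have "congO K n (A n * Y (2 * n) n ^ (2 * m) + B n) 0" for n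
  proof -
    have "dvdO K (upi ^ (N + 5 + 2 * n)) (\<lambda>k. A k * Y (2 * n) k ^ (2 * m) + B k)"
      using P[of "2 * n"] unfolding P_def by blast
    then show ?thesis by (rule dvdO_upi_pow_imp_congO) simp
  qed
  ultimately show ?thesis by blast
qed

section \<open>The zero of the diagonal form\<close>

text \<open>For \<open>v(C) = N + 2\<close> switch \<open>1\<close> to \<open>1 + \<pi>\<close>; for \<open>v(C) = N + 4\<close> switch \<open>0\<close> to \<open>1\<close>.\<close>
lemma exists_power_switch:
  assumes "odd m" and "val_eq K (N + 2) C \<or> val_eq K (N + 4) C"
  shows "\<exists>c0 c1. dvdO K (upi ^ (N + 2)) (\<lambda>n. C n * c0 ^ (2 * m))
    \<and> val_eq K (N + 4) (\<lambda>n. C n * (c1 ^ (2 * m) - c0 ^ (2 * m)))"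
  using assms(2)
proof
  assume C: "val_eq K (N + 2) C"
  have "val_eq K (N + 2 + 2) (\<lambda>n. C n * ((1 + upi) ^ (2 * m) - 1))"
    using C val_eq_one_plus_upi_power[OF assms(1)] by (rule val_eq_mult)
  moreover have "dvdO K (upi ^ (N + 2)) (\<lambda>n. C n * 1 ^ (2 * m))"
    using val_eq_imp_dvdO[OF C] by simp
  ultimately show ?thesis
    by (rule_tac exI[of _ 1], rule_tac exI[of _ "1 + upi"]) (simp add: eval_nat_numeral)
next
  assume "val_eq K (N + 4) C"
  moreover have "0 < m" using assms(1) by (rule odd_pos)
  ultimately show ?thesis by (rule_tac exI[of _ 0], rule_tac exI[of _ 1]) (simp add: power_0_left)
qed

lemma four_term_approximation:
  assumes "odd m" and "is_O K Ai" and "is_O K Aj" and "is_O K Al" and "is_O K At"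
    and "val_eq K N Ai" and "val_eq K (Suc N) (\<lambda>n. Ai n + Aj n)" and "val_eq K (Suc N) Al"
    and "val_eq K (N + 2) At \<or> val_eq K (N + 4) At"
  shows "\<exists>yi\<in>{1, 1 + upi}. \<exists>yl yt. dvdO K (upi ^ (N + 5))
    (\<lambda>n. Ai n * yi ^ (2 * m) + (Aj n + Al n * yl ^ (2 * m) + At n * yt ^ (2 * m)))"
proof -
  define d where "d = 2 * m"
  obtain c0 c1 where c0: "dvdO K (upi ^ (N + 2)) (\<lambda>n. At n * c0 ^ d)"
    and c1: "val_eq K (N + 4) (\<lambda>n. At n * (c1 ^ d - c0 ^ d))"
    using exists_power_switch[OF assms(1,9)] unfolding d_def by blast
  have \<delta>: "val_eq K 2 (\<lambda>n. (1 + upi) ^ d - 1 ^ d)"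
    using val_eq_one_plus_upi_power[OF assms(1)] unfolding d_def by simp
  have "dvdO K (upi ^ (N + 2)) (\<lambda>n. (Ai n + Aj n) + Al n)"
    using dvdO_add_of_val_eq[OF assms(7,8)] by simp
  then have "dvdO K (upi ^ (N + 2)) (\<lambda>n. ((Ai n + Aj n) + Al n) + At n * c0 ^ d)"
    using c0 by (rule dvdO_add)
  then have "dvdO K (upi ^ (N + 2)) (\<lambda>n. (Aj n + Al n * 1 ^ d + At n * c0 ^ d) + Ai n * 1 ^ d)"
    by (simp add: ac_simps)
  moreover have "val_eq K (N + 2) (\<lambda>n. Ai n * ((1 + upi) ^ d - 1 ^ d))"
    using assms(6) \<delta> by (rule val_eq_mult)
  moreover have "is_O K (\<lambda>n. Aj n + Al n * 1 ^ d + At n * c0 ^ d)" using assms(3-5) by simp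
  ultimately obtain yi where yi: "yi \<in> {1, 1 + upi}"
    and "dvdO K (upi ^ Suc (N + 2)) (\<lambda>n. (Aj n + Al n * 1 ^ d + At n * c0 ^ d) + Ai n * yi ^ d)"
    using dvdO_power_choice[OF _ assms(2)] by blast
  then have "dvdO K (upi ^ (Suc N + 2)) (\<lambda>n. (Ai n * yi ^ d + Aj n + At n * c0 ^ d) + Al n * 1 ^ d)"
    by (simp add: ac_simps)
  moreover have "val_eq K (Suc N + 2) (\<lambda>n. Al n * ((1 + upi) ^ d - 1 ^ d))"
    using assms(8) \<delta> by (rule val_eq_mult)
  moreover have "is_O K (\<lambda>n. Ai n * yi ^ d + Aj n + At n * c0 ^ d)" using assms(2,3,5) by simp
  ultimately obtain yl where
    "dvdO K (upi ^ Suc (Suc N + 2)) (\<lambda>n. (Ai n * yi ^ d + Aj n + At n * c0 ^ d) + Al n * yl ^ d)"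
    using dvdO_power_choice[OF _ assms(4)] by blast
  then have "dvdO K (upi ^ (N + 4)) (\<lambda>n. (Ai n * yi ^ d + Aj n + Al n * yl ^ d) + At n * c0 ^ d)"
    by (simp add: ac_simps eval_nat_numeral)
  moreover have "is_O K (\<lambda>n. Ai n * yi ^ d + Aj n + Al n * yl ^ d)" using assms(2-4) by simp
  ultimately obtain yt where
    "dvdO K (upi ^ Suc (N + 4)) (\<lambda>n. (Ai n * yi ^ d + Aj n + Al n * yl ^ d) + At n * yt ^ d)"
    using dvdO_power_choice[OF _ assms(5) _ c1] by blast
  then show ?thesis using yi unfolding d_def by (auto simp: ac_simps eval_nat_numeral)
qed

lemma four_term_zero:
  assumes "odd m" and "is_O K Ai" and "is_O K Aj" and "is_O K Al" and "is_O K At"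
    and "val_eq K N Ai" and "val_eq K (Suc N) (\<lambda>n. Ai n + Aj n)" and "val_eq K (Suc N) Al"
    and "val_eq K (N + 2) At \<or> val_eq K (N + 4) At"
  shows "\<exists>yi yl yt. is_O K yi
    \<and> (\<forall>n. congO K n (Ai n * yi n ^ (2 * m) + Aj n + Al n * yl ^ (2 * m) + At n * yt ^ (2 * m)) 0)"
proof -
  obtain yi yl yt where yi: "yi \<in> {1, 1 + upi}" and approx: "dvdO K (upi ^ (N + 5))
      (\<lambda>n. Ai n * yi ^ (2 * m) + (Aj n + Al n * yl ^ (2 * m) + At n * yt ^ (2 * m)))"
    using four_term_approximation[OF assms] by blast
  have "val_eq K 0 (\<lambda>n. yi)"
    using yi val_eq_one_plus_upi_pow[of 1 K] val_eq_upi_pow[of K 0] by auto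
  moreover have "is_O K (\<lambda>n. Aj n + Al n * yl ^ (2 * m) + At n * yt ^ (2 * m))" using assms(3-5) by simp
  ultimately obtain y where "is_O K y"
    and "\<forall>n. congO K n (Ai n * y n ^ (2 * m) + (Aj n + Al n * yl ^ (2 * m) + At n * yt ^ (2 * m))) 0"
    using hensel_lift[OF assms(1,2) _ assms(6) is_O_const _ approx] by blast
  then show ?thesis by (auto simp: ac_simps)
qed

lemma dvdO_upi_pow_valO:
  assumes "is_O K x" and "O_nonzero K x"
  shows "dvdO K (upi ^ valO K x) x" and "\<not> dvdO K (upi ^ Suc (valO K x)) x"
proof -
  obtain n where "\<not> congO K n (x n) 0" using assms(2) unfolding O_nonzero_def by blast
  then have "\<not> dvdO K (upi ^ Suc (2 * n)) x" using dvdO_upi_pow_imp_congO[of K "Suc (2 * n)" x n] by auto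
  then show "\<not> dvdO K (upi ^ Suc (valO K x)) x" unfolding valO_def by (rule LeastI)
  show "dvdO K (upi ^ valO K x) x"
  proof (cases "valO K x")
    case 0
    then show ?thesis using dvdO_triv[of K 1 x] by simp
  next
    case (Suc r)
    then have "r < (LEAST r. \<not> dvdO K (upi ^ Suc r) x)" unfolding valO_def by simp
    then show ?thesis using Suc not_less_Least by fastforce
  qed
qed

lemma val_eq_valO: "is_O K x \<Longrightarrow> O_nonzero K x \<Longrightarrow> val_eq K (valO K x) x"
  using dvdO_upi_pow_valO by (blast intro: val_eqI)

lemma pi_coeff_digit:
  assumes "is_O K x" and "O_nonzero K x"
  shows "pi_coeff K x \<in> {0, 1}"
    and "dvdO K (upi ^ (valO K x + 2)) (\<lambda>n. x n - upi ^ valO K x * [:1, pi_coeff K x:])"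
proof -
  define v where "v = valO K x"
  define P where "P c \<longleftrightarrow> c \<in> {0, 1} \<and> dvdO K (upi ^ (v + 2)) (\<lambda>n. x n - upi ^ v * [:1, c:])" for c
  have c0: "upi ^ v * [:1, 0:] = upi ^ v" and c1: "upi ^ v * [:1, 1:] = upi ^ v + upi ^ Suc v"
    unfolding upi_def by (simp_all add: algebra_simps flip: one_pCons)
  have "dvdO K (upi ^ Suc v) (\<lambda>n. x n - upi ^ v)"
    using val_eq_valO[OF assms] unfolding v_def val_eq_def .
  then have "P 0 \<or> P 1"
    using dvdO_upi_pow_digit[of K "\<lambda>n. x n - upi ^ v" "Suc v"] assms(1)
    unfolding P_def c0 c1 by (simp add: algebra_simps)
  moreover have "\<not> (P 0 \<and> P 1)"
  proof
    assume "P 0 \<and> P 1"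
    then have "dvdO K (upi ^ (v + 2)) (\<lambda>n. x n - upi ^ v)"
      and "dvdO K (upi ^ (v + 2)) (\<lambda>n. x n - (upi ^ v + upi ^ Suc v))"
      unfolding P_def c0 c1 by auto
    from dvdO_diff[OF this] show False using not_dvdO_upi_pow_Suc[of K "Suc v"] by simp
  qed
  ultimately have "\<exists>!c. P c" unfolding P_def by blast
  then have "P (pi_coeff K x)"
    unfolding pi_coeff_def P_def v_def by (rule theI')
  then show "pi_coeff K x \<in> {0, 1}"
    and "dvdO K (upi ^ (valO K x + 2)) (\<lambda>n. x n - upi ^ valO K x * [:1, pi_coeff K x:])"
    unfolding P_def v_def by simp_all
qed

lemma val_eq_Suc_add_of_pi_coeff_ne:
  assumes "dvdO K (upi ^ (N + 2)) (\<lambda>n. x n - upi ^ N * [:1, c:])"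
    and "dvdO K (upi ^ (N + 2)) (\<lambda>n. y n - upi ^ N * [:1, c':])"
    and "c \<in> {0, 1}" and "c' \<in> {0, 1}" and "c \<noteq> c'"
  shows "val_eq K (Suc N) (\<lambda>n. x n + y n)"
proof -
  have pq: "[:1, c:] + [:1, c':] - 2 = upi" using assms(3-5) unfolding upi_def by (auto simp: numeral_poly)
  have alg: "(a - z * P) + (b - z * Q) + 2 * z = a + b - z * (P + Q - 2)" for a b z P Q :: "int poly"
    by (simp add: algebra_simps)
  have eq: "(x n - upi ^ N * [:1, c:]) + (y n - upi ^ N * [:1, c':]) + 2 * upi ^ N = x n + y n - upi ^ Suc N"
    for n by (simp only: alg pq power_Suc2)
  have "dvdO K (upi ^ (N + 2)) (\<lambda>n. 2 * upi ^ N)"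
    using dvdO_two_mult[OF dvdO_triv[of K "upi ^ N" "\<lambda>n. 1"]] by simp
  from dvdO_add[OF dvdO_add[OF assms(1,2)] this, unfolded eq] show ?thesis
    unfolding val_eq_def by simp
qed

text \<open>Replacing a variable \<open>x\<close> by \<open>\<pi>^e x\<close> multiplies its coefficient by \<open>\<pi>^(d e)\<close>, so the
  valuation of a coefficient can be moved to any large enough value of the same level.\<close>
lemma exists_scaled_coefficient:
  assumes "is_O K x" and "O_nonzero K x" and "level K d x = (k + r) mod d"
    and "N mod d = k mod d" and "valO K x \<le> N"
  obtains e where "val_eq K (N + r) (\<lambda>n. x n * upi ^ (d * e))"
    and "dvdO K (upi ^ (N + r + 2)) (\<lambda>n. x n * upi ^ (d * e) - upi ^ (N + r) * [:1, pi_coeff K x:])"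
proof -
  have "valO K x mod d = (N + r) mod d"
    using assms(3,4) unfolding level_def by (metis mod_add_left_eq)
  moreover have "valO K x \<le> N + r" using assms(5) by simp
  ultimately obtain e where e: "N + r = valO K x + d * e"
    by (metis dvd_def le_add_diff_inverse mod_eq_dvd_iff_nat)
  have "val_eq K (valO K x + d * e) (\<lambda>n. x n * upi ^ (d * e))"
    using val_eq_valO[OF assms(1,2)] val_eq_upi_pow by (rule val_eq_mult)
  moreover have "dvdO K (upi ^ (valO K x + 2) * upi ^ (d * e))
      (\<lambda>n. (x n - upi ^ valO K x * [:1, pi_coeff K x:]) * upi ^ (d * e))"
    using pi_coeff_digit(2)[OF assms(1,2)] dvdO_triv[of K "upi ^ (d * e)" "\<lambda>n. 1", simplified]
    by (rule dvdO_mult)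
  ultimately show ?thesis
    using that unfolding e by (simp add: algebra_simps power_add)
qed

lemma O_nonzero_upi_pow: "O_nonzero K (\<lambda>n. upi ^ N)"
  unfolding O_nonzero_def
proof
  show "\<not> congO K (Suc N) (upi ^ N) 0"
    using not_dvd_mod_upi_pow_Suc[of N "Suc N" K] dvd_mod_cong[OF _ dvd_mod_0] by auto
qed

lemma has_nontrivial_zero_of_four_terms:
  assumes "distinct [i, j, l, t]" and "i < s" and "j < s" and "l < s" and "t < s" and "0 < d"
    and "is_O K yi"
    and "\<forall>n. congO K n (a i n * upi ^ (d * ei) * yi n ^ d + a j n * upi ^ (d * ej)
      + a l n * upi ^ (d * el) * yl ^ d + a t n * upi ^ (d * et) * yt ^ d) 0"
  shows "has_nontrivial_zero K d s a"
proof -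
  define x where "x q = (if q = i then (\<lambda>n. upi ^ ei * yi n) else if q = j then (\<lambda>n. upi ^ ej)
    else if q = l then (\<lambda>n. upi ^ el * yl) else if q = t then (\<lambda>n. upi ^ et * yt) else (\<lambda>n. 0))" for q
  have "is_O K (x q)" for q unfolding x_def using assms(7) by simp
  moreover have "O_nonzero K (x j)" using assms(1) unfolding x_def by (simp add: O_nonzero_upi_pow)
  moreover have "(\<Sum>q<s. a q n * x q n ^ d) = a i n * upi ^ (d * ei) * yi n ^ d + a j n * upi ^ (d * ej)
      + a l n * upi ^ (d * el) * yl ^ d + a t n * upi ^ (d * et) * yt ^ d" for n
  proof -
    have "(\<Sum>q<s. a q n * x q n ^ d) = (\<Sum>q\<in>{i, j, l, t}. a q n * x q n ^ d)"
      using assms(2-6) by (intro sum.mono_neutral_right) (auto simp: x_def)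
    also have "\<dots> = a i n * x i n ^ d + a j n * x j n ^ d + a l n * x l n ^ d + a t n * x t n ^ d"
      using assms(1) by (simp add: algebra_simps)
    finally show ?thesis
      using assms(1) by (simp add: x_def power_mult_distrib ac_simps flip: power_mult)
  qed
  ultimately show ?thesis
    unfolding has_nontrivial_zero_def using assms(3,8) by metis
qed

lemma has_nontrivial_zero_of_scaled_coefficients:
  assumes "odd m" and "distinct [i, j, l, t]" and "i < s" and "j < s" and "l < s" and "t < s"
    and "\<forall>q<s. is_O K (a q)"
    and "val_eq K N (\<lambda>n. a i n * upi ^ (2 * m * ei))"
    and "val_eq K (Suc N) (\<lambda>n. a i n * upi ^ (2 * m * ei) + a j n * upi ^ (2 * m * ej))"
    and "val_eq K (Suc N) (\<lambda>n. a l n * upi ^ (2 * m * el))"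
    and "val_eq K (N + 2) (\<lambda>n. a t n * upi ^ (2 * m * et))
      \<or> val_eq K (N + 4) (\<lambda>n. a t n * upi ^ (2 * m * et))"
  shows "has_nontrivial_zero K (2 * m) s a"
proof -
  have O: "is_O K (\<lambda>n. a q n * upi ^ c)" if "q < s" for q c using assms(7) that by simp
  obtain yi yl yt where "is_O K yi" and "\<forall>n. congO K n (a i n * upi ^ (2 * m * ei) * yi n ^ (2 * m)
      + a j n * upi ^ (2 * m * ej) + a l n * upi ^ (2 * m * el) * yl ^ (2 * m)
      + a t n * upi ^ (2 * m * et) * yt ^ (2 * m)) 0"
    using four_term_zero[OF assms(1) O[OF assms(3)] O[OF assms(4)] O[OF assms(5)] O[OF assms(6)] assms(8-11)]
    by blast
  moreover have "0 < 2 * m" using odd_pos[OF assms(1)] by simp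
  ultimately show ?thesis using has_nontrivial_zero_of_four_terms[OF assms(2-6)] by blast
qed

lemma distinct_by_levels:
  assumes "6 \<le> d" and "i \<noteq> j" and "r \<in> {2, 4}"
    and "level K d (a i) = k mod d" and "level K d (a j) = k mod d"
    and "level K d (a l) = (k + 1) mod d" and "level K d (a t) = (k + r) mod d"
  shows "distinct [i, j, l, t]"
proof -
  have neq: "(k + u) mod d \<noteq> (k + v) mod d" if "u < v" and "v < u + d" for u v
  proof
    assume "(k + u) mod d = (k + v) mod d"
    then have "d dvd v - u" using that(1) by (metis mod_eq_dvd_iff_nat add_le_cancel_left add_diff_cancel_left less_imp_le)
    then have "d \<le> v - u" using that(1) by (intro dvd_imp_le) simp_all
    then show False using that by linarith
  qed
  show ?thesis
    using assms neq[of 0 1] neq[of 0 r] neq[of 1 r] by auto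
qed

theorem lemma17:
  fixes K :: ramified_case and m s k i j l t :: nat and a :: "nat \<Rightarrow> nat \<Rightarrow> int poly"
  assumes "odd m" and "m \<ge> 3"
    and "\<forall>q<s. is_O K (a q) \<and> O_nonzero K (a q)"
    and "i < s" and "j < s" and "i \<noteq> j"
    and "level K (2 * m) (a i) = k mod (2 * m)"
    and "level K (2 * m) (a j) = k mod (2 * m)"
    and "pi_coeff K (a i) \<noteq> pi_coeff K (a j)"
    and "l < s" and "level K (2 * m) (a l) = (k + 1) mod (2 * m)"
    and "t < s" and "level K (2 * m) (a t) = (k + 2) mod (2 * m)
                   \<or> level K (2 * m) (a t) = (k + 4) mod (2 * m)"
  shows "has_nontrivial_zero K (2 * m) s a"
proof -
  define d where "d = 2 * m"
  obtain r where r: "r \<in> {2, 4}" and level_t: "level K d (a t) = (k + r) mod d"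
    using assms(13) unfolding d_def by blast
  have level: "level K d (a i) = (k + 0) mod d" "level K d (a j) = (k + 0) mod d"
    "level K d (a l) = (k + 1) mod d"
    using assms(7,8,11) unfolding d_def by simp_all
  have coeff: "is_O K (a q)" "O_nonzero K (a q)" if "q < s" for q
    using assms(3) that by auto
  define S where "S = valO K (a i) + valO K (a j) + valO K (a l) + valO K (a t)"
  define N where "N = k + d * S"
  have N: "N mod d = k mod d" unfolding N_def by simp
  have "S \<le> N" using assms(2) mult_le_mono1[of 1 d S] unfolding N_def d_def by linarith
  then have bound: "valO K (a i) \<le> N" "valO K (a j) \<le> N" "valO K (a l) \<le> N" "valO K (a t) \<le> N"
    unfolding S_def by auto
  obtain ei ej el et where
    i: "val_eq K N (\<lambda>n. a i n * upi ^ (d * ei))"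
      "dvdO K (upi ^ (N + 2)) (\<lambda>n. a i n * upi ^ (d * ei) - upi ^ N * [:1, pi_coeff K (a i):])" and
    j: "dvdO K (upi ^ (N + 2)) (\<lambda>n. a j n * upi ^ (d * ej) - upi ^ N * [:1, pi_coeff K (a j):])" and
    l: "val_eq K (N + 1) (\<lambda>n. a l n * upi ^ (d * el))" and
    t: "val_eq K (N + r) (\<lambda>n. a t n * upi ^ (d * et))"
    using exists_scaled_coefficient[OF coeff[OF assms(4)] level(1) N bound(1)]
      exists_scaled_coefficient[OF coeff[OF assms(5)] level(2) N bound(2)]
      exists_scaled_coefficient[OF coeff[OF assms(10)] level(3) N bound(3)]
      exists_scaled_coefficient[OF coeff[OF assms(12)] level_t N bound(4)]
    by (metis add_0_right)
  have "val_eq K (Suc N) (\<lambda>n. a i n * upi ^ (d * ei) + a j n * upi ^ (d * ej))"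
    using val_eq_Suc_add_of_pi_coeff_ne[OF i(2) j] pi_coeff_digit(1) coeff assms(4,5,9) by blast
  moreover have "distinct [i, j, l, t]"
    by (rule distinct_by_levels[OF _ assms(6) r]) (use assms(2,7,8,11) level_t in \<open>simp_all add: d_def\<close>)
  ultimately show ?thesis
    using coeff(1) i(1) l t r unfolding d_def
    by (intro has_nontrivial_zero_of_scaled_coefficients[OF assms(1) _ assms(4,5,10,12)]) auto
qed

end
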